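(* Let $I\unlhd K[x_1,\dots,x_n]$ be a homogeneous ideal and let $w\in\mathbb R^n$. Then the map $\{-1\}\times\mathbb R^n\to\mathbb R^n$, $(-1,v)\mapsto v$, maps $C_{(-1,w)}(\pi^{-1}I)\cap(\{-1\}\times\mathbb R^n)$ into the Gröbner polytope $C_{\nu,w}(I)$.
   Context: Let $K$ be a complete field with a non-trivial discrete valuation $\nu$ (normalized with $\nu(p)=1$) and a uniformizing parameter $p$. Let $\mathcal O_K$ be its ring of integers and $\mathfrak K$ its residue field. Let $R\subseteq\mathcal O_K$ be a dense noetherian subring with $p\in R$. The map $\pi:R[[t]][x]\to\mathcal O_K[x]\subseteq K[x]$ sends $t\mapsto p$, and $\pi^{-1}I$ denotes the preimage. For $f=\sum_\alpha c_\alpha x^\alpha\in K[x]$, $\operatorname{in}_{\nu,w}(f)=\sum\overline{c_\alpha p^{-\nu(c_\alpha)}}x^\alpha\in\mathfrak K[x]$, summed over the $\alpha$ with $c_\alpha\ne0$ and $w\cdot\alpha-\nu(c_\alpha)$ maximal. $\operatorname{in}_{\nu,w}(I)$ is the ideal generated by these initial forms. For a homogeneous $I$, the Gröbner polytope is $C_{\nu,w}(I)=\overline{\{v\in\mathbb R^n:\operatorname{in}_{\nu,v}(I)=\operatorname{in}_{\nu,w}(I)\}}$ (Euclidean closure). For $f=\sum c_{\alpha,\beta}t^\beta x^\alpha\in R[[t]][x]$ and $u\in\mathbb R_{<0}\times\mathbb R^n$, $\operatorname{in}_u(f)$ is the sum of the terms with $u\cdot(\beta,\alpha)$ maximal. $\operatorname{in}_u(J)\unlhd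 R[t,x]$ is generated by these initial forms. For an $x$-homogeneous ideal $J\unlhd R[[t]][x]$ (generated by elements that are homogeneous as polynomials in $x$ with coefficients in $R[[t]]$), the Gröbner cone is $C_u(J)=\overline{\{v\in\mathbb R_{<0}\times\mathbb R^n:\operatorname{in}_v(J)=\operatorname{in}_u(J)\}}$. *)

theory Defs
  imports "HOL-Analysis.Analysis" "HOL-Library.Poly_Mapping"
    "HOL-Computational_Algebra.Formal_Power_Series"
begin

text \<open>The discrete valuation is a map
  nu :: 'k => int, only meaningful on nonzero elements (nu 0 = infinity is handled by
  explicit case distinctions). Variables x_1..x_n are indexed by a finite type 'n;
  exponent vectors are 'n =>0 nat; polynomials in K[x] have type ('n =>0 nat) =>0 'k;
  elements of R[[t]][x] have type ('n =>0 nat) =>0 'k fps (with coefficients in R).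
  The residue field is an abstract field 'f together with the residue map
  res : O_K -> 'f (a surjective ring homomorphism with kernel the maximal ideal).\<close>

definition discrete_valuation :: "('k::field \<Rightarrow> int) \<Rightarrow> 'k \<Rightarrow> bool" where
  "discrete_valuation \<nu> p \<longleftrightarrow>
     p \<noteq> 0 \<and> \<nu> p = 1 \<and>
     (\<forall>a b. a \<noteq> 0 \<longrightarrow> b \<noteq> 0 \<longrightarrow> \<nu> (a * b) = \<nu> a + \<nu> b) \<and>
     (\<forall>a b. a \<noteq> 0 \<longrightarrow> b \<noteq> 0 \<longrightarrow> a + b \<noteq> 0 \<longrightarrow> \<nu> (a + b) \<ge> min (\<nu> a) (\<nu> b))"

definition val_lim :: "('k::field \<Rightarrow> int) \<Rightarrow> (nat \<Rightarrow> 'k) \<Rightarrow> 'k \<Rightarrow> bool" where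
  "val_lim \<nu> s L \<longleftrightarrow> (\<forall>M::int. \<exists>N. \<forall>m\<ge>N. s m = L \<or> \<nu> (s m - L) \<ge> M)"

definition val_cauchy :: "('k::field \<Rightarrow> int) \<Rightarrow> (nat \<Rightarrow> 'k) \<Rightarrow> bool" where
  "val_cauchy \<nu> s \<longleftrightarrow> (\<forall>M::int. \<exists>N. \<forall>m\<ge>N. \<forall>k\<ge>N. s m = s k \<or> \<nu> (s m - s k) \<ge> M)"

definition val_complete :: "('k::field \<Rightarrow> int) \<Rightarrow> bool" where
  "val_complete \<nu> \<longleftrightarrow> (\<forall>s. val_cauchy \<nu> s \<longrightarrow> (\<exists>L. val_lim \<nu> s L))"

definition val_ring :: "('k::field \<Rightarrow> int) \<Rightarrow> 'k set" where
  "val_ring \<nu> = {a. a = 0 \<or> \<nu> a \<ge> 0}"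

definition residue_map :: "('k::field \<Rightarrow> int) \<Rightarrow> ('k \<Rightarrow> 'f::field) \<Rightarrow> bool" where
  "residue_map \<nu> res \<longleftrightarrow>
     (\<forall>a\<in>val_ring \<nu>. \<forall>b\<in>val_ring \<nu>. res (a + b) = res a + res b \<and> res (a * b) = res a * res b) \<and>
     res 1 = 1 \<and>
     (\<forall>y. \<exists>a\<in>val_ring \<nu>. res a = y) \<and>
     (\<forall>a\<in>val_ring \<nu>. res a = 0 \<longleftrightarrow> (a = 0 \<or> \<nu> a \<ge> 1))"

definition gen_ideal :: "'a::comm_ring_1 set \<Rightarrow> 'a set \<Rightarrow> 'a set" where
  "gen_ideal S G = {(\<Sum>i<(m::nat). h i * g i) | m h g. \<forall>i<m. h i \<in> S \<and> g i \<in> G}"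

definition is_subring :: "'a::comm_ring_1 set \<Rightarrow> bool" where
  "is_subring R \<longleftrightarrow> 0 \<in> R \<and> 1 \<in> R \<and> (\<forall>a\<in>R. \<forall>b\<in>R. a + b \<in> R \<and> a * b \<in> R \<and> - a \<in> R)"

definition ideal_in :: "'a::comm_ring_1 set \<Rightarrow> 'a set \<Rightarrow> bool" where
  "ideal_in R J \<longleftrightarrow> J \<subseteq> R \<and> 0 \<in> J \<and> (\<forall>a\<in>J. \<forall>b\<in>J. a + b \<in> J) \<and> (\<forall>r\<in>R. \<forall>a\<in>J. r * a \<in> J)"

definition noetherian_subring :: "'a::comm_ring_1 set \<Rightarrow> bool" where
  "noetherian_subring R \<longleftrightarrow> is_subring R \<and>
     (\<forall>J. ideal_in R J \<longrightarrow> (\<exists>F. finite F \<and> F \<subseteq> J \<and> J = gen_ideal R F))"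

definition dense_in_val_ring :: "('k::field \<Rightarrow> int) \<Rightarrow> 'k set \<Rightarrow> bool" where
  "dense_in_val_ring \<nu> R \<longleftrightarrow>
     (\<forall>a\<in>val_ring \<nu>. \<forall>M::int. \<exists>r\<in>R. a = r \<or> \<nu> (a - r) \<ge> M)"

definition wdot :: "real^'n::finite \<Rightarrow> ('n \<Rightarrow>\<^sub>0 nat) \<Rightarrow> real" where
  "wdot w \<alpha> = (\<Sum>i\<in>UNIV. w $ i * real (Poly_Mapping.lookup \<alpha> i))"

definition total_deg :: "('n::finite \<Rightarrow>\<^sub>0 nat) \<Rightarrow> nat" where
  "total_deg \<alpha> = (\<Sum>i\<in>UNIV. Poly_Mapping.lookup \<alpha> i)"

definition homogeneous_poly :: "(('n::finite \<Rightarrow>\<^sub>0 nat) \<Rightarrow>\<^sub>0 'k::comm_ring_1) \<Rightarrow> bool" where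
  "homogeneous_poly f \<longleftrightarrow> (\<exists>d. \<forall>\<alpha>\<in>Poly_Mapping.keys f. total_deg \<alpha> = d)"

definition homogeneous_ideal :: "(('n::finite \<Rightarrow>\<^sub>0 nat) \<Rightarrow>\<^sub>0 'k::field) set \<Rightarrow> bool" where
  "homogeneous_ideal I \<longleftrightarrow> (\<exists>G. (\<forall>g\<in>G. homogeneous_poly g) \<and> I = gen_ideal UNIV G)"

definition in_nu :: "('k::field \<Rightarrow> int) \<Rightarrow> ('k \<Rightarrow> 'f::field) \<Rightarrow> 'k \<Rightarrow> real^'n::finite
     \<Rightarrow> (('n \<Rightarrow>\<^sub>0 nat) \<Rightarrow>\<^sub>0 'k) \<Rightarrow> (('n \<Rightarrow>\<^sub>0 nat) \<Rightarrow>\<^sub>0 'f)" where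
  "in_nu \<nu> res p w f =
     (let wt = (\<lambda>\<alpha>. wdot w \<alpha> - real_of_int (\<nu> (Poly_Mapping.lookup f \<alpha>)));
          M = Max (wt ` Poly_Mapping.keys f)
      in \<Sum>\<alpha>\<in>{\<alpha>\<in>Poly_Mapping.keys f. wt \<alpha> = M}.
           Poly_Mapping.single \<alpha> (res (Poly_Mapping.lookup f \<alpha> * p powi (- \<nu> (Poly_Mapping.lookup f \<alpha>)))))"

definition in_nu_ideal :: "('k::field \<Rightarrow> int) \<Rightarrow> ('k \<Rightarrow> 'f::field) \<Rightarrow> 'k \<Rightarrow> real^'n::finite
     \<Rightarrow> (('n \<Rightarrow>\<^sub>0 nat) \<Rightarrow>\<^sub>0 'k) set \<Rightarrow> (('n \<Rightarrow>\<^sub>0 nat) \<Rightarrow>\<^sub>0 'f) set" where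
  "in_nu_ideal \<nu> res p w I = gen_ideal UNIV (in_nu \<nu> res p w ` I)"

definition groebner_polytope :: "('k::field \<Rightarrow> int) \<Rightarrow> ('k \<Rightarrow> 'f::field) \<Rightarrow> 'k
     \<Rightarrow> (('n::finite \<Rightarrow>\<^sub>0 nat) \<Rightarrow>\<^sub>0 'k) set \<Rightarrow> real^'n \<Rightarrow> (real^'n) set" where
  "groebner_polytope \<nu> res p I w =
     closure {v. in_nu_ideal \<nu> res p v I = in_nu_ideal \<nu> res p w I}"

definition RtX :: "'k::field set \<Rightarrow> (('n \<Rightarrow>\<^sub>0 nat) \<Rightarrow>\<^sub>0 'k fps) set" where
  "RtX R = {f. \<forall>\<alpha> \<beta>. fps_nth (Poly_Mapping.lookup f \<alpha>) \<beta> \<in> R}"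

definition RtxPoly :: "'k::field set \<Rightarrow> (('n \<Rightarrow>\<^sub>0 nat) \<Rightarrow>\<^sub>0 'k fps) set" where
  "RtxPoly R = {f \<in> RtX R. \<forall>\<alpha>. finite {\<beta>. fps_nth (Poly_Mapping.lookup f \<alpha>) \<beta> \<noteq> 0}}"

definition subst_p :: "('k::field \<Rightarrow> int) \<Rightarrow> 'k \<Rightarrow> 'k fps \<Rightarrow> 'k" where
  "subst_p \<nu> p c = (THE L. val_lim \<nu> (\<lambda>N. \<Sum>\<beta><N. fps_nth c \<beta> * p ^ \<beta>) L)"

definition pi_map :: "('k::field \<Rightarrow> int) \<Rightarrow> 'k \<Rightarrow> (('n \<Rightarrow>\<^sub>0 nat) \<Rightarrow>\<^sub>0 'k fps)
     \<Rightarrow> (('n \<Rightarrow>\<^sub>0 nat) \<Rightarrow>\<^sub>0 'k)" where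
  "pi_map \<nu> p f = Poly_Mapping.map (subst_p \<nu> p) f"

definition pi_preimage :: "('k::field \<Rightarrow> int) \<Rightarrow> 'k \<Rightarrow> 'k set \<Rightarrow> (('n \<Rightarrow>\<^sub>0 nat) \<Rightarrow>\<^sub>0 'k) set
     \<Rightarrow> (('n \<Rightarrow>\<^sub>0 nat) \<Rightarrow>\<^sub>0 'k fps) set" where
  "pi_preimage \<nu> p R I = {f \<in> RtX R. pi_map \<nu> p f \<in> I}"

definition tw :: "real \<times> (real^'n::finite) \<Rightarrow> ('n \<Rightarrow>\<^sub>0 nat) \<Rightarrow> nat \<Rightarrow> real" where
  "tw u \<alpha> \<beta> = fst u * real \<beta> + wdot (snd u) \<alpha>"

definition in_u :: "real \<times> (real^'n::finite) \<Rightarrow> (('n \<Rightarrow>\<^sub>0 nat) \<Rightarrow>\<^sub>0 'k::field fps)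
     \<Rightarrow> (('n \<Rightarrow>\<^sub>0 nat) \<Rightarrow>\<^sub>0 'k fps)" where
  "in_u u f =
     (let M = Sup {tw u \<alpha> \<beta> | \<alpha> \<beta>. fps_nth (Poly_Mapping.lookup f \<alpha>) \<beta> \<noteq> 0}
      in \<Sum>\<alpha>\<in>Poly_Mapping.keys f. Poly_Mapping.single \<alpha>
            (Abs_fps (\<lambda>\<beta>. if tw u \<alpha> \<beta> = M then fps_nth (Poly_Mapping.lookup f \<alpha>) \<beta> else 0)))"

definition in_u_ideal :: "'k::field set \<Rightarrow> real \<times> (real^'n::finite)
     \<Rightarrow> (('n \<Rightarrow>\<^sub>0 nat) \<Rightarrow>\<^sub>0 'k fps) set \<Rightarrow> (('n \<Rightarrow>\<^sub>0 nat) \<Rightarrow>\<^sub>0 'k fps) set" where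
  "in_u_ideal R u J = gen_ideal (RtxPoly R) (in_u u ` J)"

definition groebner_cone :: "'k::field set \<Rightarrow> real \<times> (real^'n::finite)
     \<Rightarrow> (('n \<Rightarrow>\<^sub>0 nat) \<Rightarrow>\<^sub>0 'k fps) set \<Rightarrow> (real \<times> (real^'n)) set" where
  "groebner_cone R u J = closure {v. fst v < 0 \<and> in_u_ideal R v J = in_u_ideal R u J}"

end

theory Submission
  imports Defs
begin

text \<open>For \<open>u = (-1, v)\<close> the initial form \<open>in\<^sub>u f\<close> of \<open>f \<in> R[[t]][x]\<close> keeps, in every
  coefficient, only the lowest power of \<open>t\<close>, and only the monomials maximising
  \<open>v\<cdot>\<alpha> - subdegree\<close>. Substituting \<open>t := 1\<close> and reducing modulo \<open>p\<close> sends it to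
  \<open>in\<^sub>\<nu>\<^sub>,\<^sub>v(\<pi> f)\<close> or to zero, because \<open>\<nu>(c(p)) \<ge> subdegree c\<close> with equality exactly when the
  lowest coefficient of \<open>c\<close> is a unit. Conversely, expanding the coefficients of \<open>g \<in> I\<close>
  (scaled into \<open>\<O>\<^sub>K[x]\<close> by a power of \<open>p\<close>) in base \<open>p\<close> with digits from the dense subring \<open>R\<close>
  gives \<open>f \<in> \<pi>\<^sup>-\<^sup>1 I\<close> whose initial form reduces to \<open>in\<^sub>\<nu>\<^sub>,\<^sub>v g\<close>. Hence \<open>in\<^sub>\<nu>\<^sub>,\<^sub>v I\<close> is
  generated by the reduction of \<open>in\<^sub>(\<^sub>-\<^sub>1\<^sub>,\<^sub>v\<^sub>)(\<pi>\<^sup>-\<^sup>1 I)\<close>. As initial forms are invariant under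
  positive scaling of \<open>(s, v)\<close>, every point of the Groebner cone with \<open>s < 0\<close> rescales to a
  point \<open>(-1, v)\<close> whose \<open>v\<close> has the same initial ideal as \<open>w\<close>, and limits of such points
  stay in the closure.\<close>

lemma lookup_sum_single:
  "finite K \<Longrightarrow>
   Poly_Mapping.lookup (\<Sum>\<alpha>\<in>K. Poly_Mapping.single \<alpha> (g \<alpha>)) \<gamma> = (if \<gamma> \<in> K then g \<gamma> else 0)"
  by (simp add: lookup_sum lookup_single when_def)

lemma poly_mapping_sum_single_keys:
  "q = (\<Sum>\<alpha>\<in>Poly_Mapping.keys q. Poly_Mapping.single \<alpha> (Poly_Mapping.lookup q \<alpha>))"
  by (rule poly_mapping_eqI) (simp add: lookup_sum_single in_keys_iff)

lemma times_poly_mapping_expand: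
  fixes a b :: "'a::comm_monoid_add \<Rightarrow>\<^sub>0 'b::comm_semiring_1"
  shows "a * b = (\<Sum>\<alpha>\<in>Poly_Mapping.keys a. \<Sum>\<beta>\<in>Poly_Mapping.keys b.
      Poly_Mapping.single (\<alpha> + \<beta>) (Poly_Mapping.lookup a \<alpha> * Poly_Mapping.lookup b \<beta>))"
proof -
  have "a * b = (\<Sum>\<alpha>\<in>Poly_Mapping.keys a. Poly_Mapping.single \<alpha> (Poly_Mapping.lookup a \<alpha>)) *
      (\<Sum>\<beta>\<in>Poly_Mapping.keys b. Poly_Mapping.single \<beta> (Poly_Mapping.lookup b \<beta>))"
    using poly_mapping_sum_single_keys[of a] poly_mapping_sum_single_keys[of b] by simp
  also have "\<dots> = (\<Sum>\<alpha>\<in>Poly_Mapping.keys a. \<Sum>\<beta>\<in>Poly_Mapping.keys b.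
      Poly_Mapping.single \<alpha> (Poly_Mapping.lookup a \<alpha>) * Poly_Mapping.single \<beta> (Poly_Mapping.lookup b \<beta>))"
    by (rule sum_product)
  finally show ?thesis by (simp add: mult_single)
qed

lemma lookup_map_zero:
  "g 0 = 0 \<Longrightarrow> Poly_Mapping.lookup (Poly_Mapping.map g q) \<alpha> = g (Poly_Mapping.lookup q \<alpha>)"
  by (simp add: Poly_Mapping.map.rep_eq when_def)

lemma lookup_single_zero_times:
  fixes g :: "'a::comm_monoid_add \<Rightarrow>\<^sub>0 'b::comm_semiring_1"
  shows "Poly_Mapping.lookup (Poly_Mapping.single 0 c * g) \<alpha> = c * Poly_Mapping.lookup g \<alpha>"
  by (simp flip: mult_map_scale_conv_mult add: lookup_map_zero)

lemma wdot_scaleR: "wdot (c *\<^sub>R v) \<alpha> = c * wdot v \<alpha>"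
  unfolding wdot_def by (simp add: sum_distrib_left algebra_simps)

lemma gen_ideal_sum_mult:
  assumes "finite F" "\<And>i. i \<in> F \<Longrightarrow> h i \<in> S \<and> g i \<in> G"
  shows "(\<Sum>i\<in>F. h i * g i) \<in> gen_ideal S G"
proof -
  obtain e where e: "bij_betw e {..<card F} F"
    using ex_bij_betw_nat_finite[OF assms(1)] by (auto simp: atLeast0LessThan)
  have "(\<Sum>i\<in>F. h i * g i) = (\<Sum>j<card F. h (e j) * g (e j))"
    using sum.reindex_bij_betw[OF e, of "\<lambda>i. h i * g i"] by simp
  also have "\<dots> \<in> gen_ideal S G"
    unfolding gen_ideal_def using assms(2) bij_betwE[OF e] by fastforce
  finally show ?thesis .
qed

lemma gen_ideal_add:
  assumes "x \<in> gen_ideal S G" "y \<in> gen_ideal S G"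
  shows "x + y \<in> gen_ideal S G"
proof -
  obtain m1 h1 g1 where x: "x = (\<Sum>i<(m1::nat). h1 i * g1 i)" "\<forall>i<m1. h1 i \<in> S \<and> g1 i \<in> G"
    using assms(1) unfolding gen_ideal_def by blast
  obtain m2 h2 g2 where y: "y = (\<Sum>i<(m2::nat). h2 i * g2 i)" "\<forall>i<m2. h2 i \<in> S \<and> g2 i \<in> G"
    using assms(2) unfolding gen_ideal_def by blast
  have "x + y = (\<Sum>z\<in>{..<m1} <+> {..<m2}. case_sum h1 h2 z * case_sum g1 g2 z)"
    by (simp add: sum.Plus x y comp_def)
  also have "\<dots> \<in> gen_ideal S G"
    by (rule gen_ideal_sum_mult) (auto simp: x y)
  finally show ?thesis .
qed

lemma zero_in_gen_ideal: "0 \<in> gen_ideal S G"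
  unfolding gen_ideal_def by (rule CollectI, rule exI[of _ 0]) simp

lemma gen_in_gen_ideal: "1 \<in> S \<Longrightarrow> g \<in> G \<Longrightarrow> g \<in> gen_ideal S G"
  using gen_ideal_sum_mult[of "{()}" "\<lambda>_. 1" S "\<lambda>_. g" G] by simp

lemma gen_ideal_mult_left:
  assumes "x \<in> gen_ideal UNIV G"
  shows "r * x \<in> gen_ideal UNIV G"
proof -
  obtain m h g where x: "x = (\<Sum>i<(m::nat). h i * g i)" "\<forall>i<m. g i \<in> G"
    using assms unfolding gen_ideal_def by blast
  have "r * x = (\<Sum>i<m. (r * h i) * g i)"
    by (simp add: x sum_distrib_left mult.assoc)
  also have "\<dots> \<in> gen_ideal UNIV G"
    by (rule gen_ideal_sum_mult) (use x in auto)
  finally show ?thesis .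
qed

lemma gen_ideal_sum:
  "(\<And>i. i \<in> F \<Longrightarrow> x i \<in> gen_ideal S G) \<Longrightarrow> sum x F \<in> gen_ideal S G"
  by (induction F rule: infinite_finite_induct) (auto intro: gen_ideal_add zero_in_gen_ideal)

lemma gen_ideal_minimal:
  assumes "G \<subseteq> gen_ideal UNIV H"
  shows "gen_ideal UNIV G \<subseteq> gen_ideal UNIV H"
proof
  fix x assume "x \<in> gen_ideal UNIV G"
  then obtain m h g where x: "x = (\<Sum>i<(m::nat). h i * g i)" "\<forall>i<m. g i \<in> G"
    unfolding gen_ideal_def by blast
  show "x \<in> gen_ideal UNIV H" unfolding x(1)
    by (intro gen_ideal_sum gen_ideal_mult_left) (use x assms in auto)
qed

lemma gen_ideal_mono: "G \<subseteq> G' \<Longrightarrow> gen_ideal S G \<subseteq> gen_ideal S G'"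
  unfolding gen_ideal_def by blast

subsection \<open>Initial forms\<close>

abbreviation fps_lowest_coeff :: "'a::zero fps \<Rightarrow> 'a" where
  "fps_lowest_coeff c \<equiv> fps_nth c (subdegree c)"

definition fps_lowest_term :: "'a::zero fps \<Rightarrow> 'a fps" where
  "fps_lowest_term c = fps_of_poly (monom (fps_lowest_coeff c) (subdegree c))"

lemma fps_nth_lowest_term:
  "fps_nth (fps_lowest_term c) \<beta> = (if \<beta> = subdegree c then fps_nth c \<beta> else 0)"
  by (simp add: fps_lowest_term_def)

definition lowest_weight :: "real \<Rightarrow> real^'n::finite \<Rightarrow> (('n \<Rightarrow>\<^sub>0 nat) \<Rightarrow>\<^sub>0 'k::zero fps)
    \<Rightarrow> ('n \<Rightarrow>\<^sub>0 nat) \<Rightarrow> real" where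
  "lowest_weight s v f \<alpha> = s * real (subdegree (Poly_Mapping.lookup f \<alpha>)) + wdot v \<alpha>"

lemma tw_le_lowest_weight:
  assumes "s < 0" "fps_nth (Poly_Mapping.lookup f \<alpha>) \<beta> \<noteq> 0"
  shows "tw (s, v) \<alpha> \<beta> \<le> lowest_weight s v f \<alpha>"
proof -
  have "subdegree (Poly_Mapping.lookup f \<alpha>) \<le> \<beta>"
    using assms(2) by (meson leI nth_less_subdegree_zero)
  then show ?thesis
    using assms(1) by (simp add: tw_def lowest_weight_def mult_le_cancel_left)
qed

lemma tw_eq_lowest_weight_iff:
  "s < 0 \<Longrightarrow> tw (s, v) \<alpha> \<beta> = lowest_weight s v f \<alpha> \<longleftrightarrow> \<beta> = subdegree (Poly_Mapping.lookup f \<alpha>)"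
  by (auto simp: tw_def lowest_weight_def)

lemma Sup_tw_eq_Max_lowest_weight:
  assumes s: "s < 0" and ne: "Poly_Mapping.keys f \<noteq> {}"
  shows "Sup {tw (s, v) \<alpha> \<beta> | \<alpha> \<beta>. fps_nth (Poly_Mapping.lookup f \<alpha>) \<beta> \<noteq> 0}
    = Max (lowest_weight s v f ` Poly_Mapping.keys f)" (is "Sup ?S = ?M")
proof (rule cSup_eq_maximum)
  have "?M \<in> lowest_weight s v f ` Poly_Mapping.keys f" using ne by simp
  then obtain \<alpha> where \<alpha>: "\<alpha> \<in> Poly_Mapping.keys f" "lowest_weight s v f \<alpha> = ?M" by auto
  then have "fps_lowest_coeff (Poly_Mapping.lookup f \<alpha>) \<noteq> 0"
    by (simp add: in_keys_iff)
  moreover have "tw (s, v) \<alpha> (subdegree (Poly_Mapping.lookup f \<alpha>)) = ?M"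
    using \<alpha>(2) by (simp add: tw_def lowest_weight_def)
  ultimately show "?M \<in> ?S" unfolding mem_Collect_eq by metis
  show "y \<le> ?M" if "y \<in> ?S" for y
  proof -
    obtain \<alpha> \<beta> where y: "y = tw (s, v) \<alpha> \<beta>" "fps_nth (Poly_Mapping.lookup f \<alpha>) \<beta> \<noteq> 0"
      using \<open>y \<in> ?S\<close> by blast
    then have "\<alpha> \<in> Poly_Mapping.keys f" by (auto simp: in_keys_iff)
    then have "lowest_weight s v f \<alpha> \<le> ?M" by simp
    with tw_le_lowest_weight[OF s y(2), of v] y(1) show ?thesis by linarith
  qed
qed

lemma in_u_eq_lowest_terms:
  assumes s: "s < 0"
  shows "in_u (s, v) f = (\<Sum>\<alpha>\<in>Poly_Mapping.keys f. Poly_Mapping.single \<alpha>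
    (if lowest_weight s v f \<alpha> = Max (lowest_weight s v f ` Poly_Mapping.keys f)
     then fps_lowest_term (Poly_Mapping.lookup f \<alpha>) else 0))"
proof (cases "Poly_Mapping.keys f = {}")
  case False
  define M where "M = Max (lowest_weight s v f ` Poly_Mapping.keys f)"
  have "Abs_fps (\<lambda>\<beta>. if tw (s, v) \<alpha> \<beta> = M then fps_nth (Poly_Mapping.lookup f \<alpha>) \<beta> else 0)
    = (if lowest_weight s v f \<alpha> = M then fps_lowest_term (Poly_Mapping.lookup f \<alpha>) else 0)"
    if "\<alpha> \<in> Poly_Mapping.keys f" for \<alpha>
  proof (rule fps_ext)
    fix \<beta>
    have M: "lowest_weight s v f \<alpha> \<le> M" using that by (simp add: M_def)
    show "fps_nth (Abs_fps (\<lambda>\<beta>. if tw (s, v) \<alpha> \<beta> = M then fps_nth (Poly_Mapping.lookup f \<alpha>) \<beta> else 0)) \<beta>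
      = fps_nth (if lowest_weight s v f \<alpha> = M then fps_lowest_term (Poly_Mapping.lookup f \<alpha>) else 0) \<beta>"
    proof (cases "fps_nth (Poly_Mapping.lookup f \<alpha>) \<beta> = 0")
      case False
      with M tw_le_lowest_weight[OF s False, of v] tw_eq_lowest_weight_iff[OF s, of v \<alpha> \<beta> f]
      show ?thesis by (auto simp: fps_nth_lowest_term)
    qed (use that in \<open>auto simp: fps_nth_lowest_term in_keys_iff\<close>)
  qed
  then show ?thesis
    unfolding in_u_def Let_def Sup_tw_eq_Max_lowest_weight[OF s False] M_def[symmetric]
    by (intro sum.cong) auto
qed (simp add: in_u_def)

lemma in_u_scale:
  assumes "s < 0" "c > 0"
  shows "in_u (c * s, c *\<^sub>R v) f = in_u (s, v) f"
proof -
  have cs: "c * s < 0" using assms by (simp add: mult_pos_neg)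
  have scale: "lowest_weight (c * s) (c *\<^sub>R v) f \<alpha> = c * lowest_weight s v f \<alpha>" for \<alpha>
    unfolding lowest_weight_def wdot_scaleR by (simp add: algebra_simps)
  have max: "Max (lowest_weight (c * s) (c *\<^sub>R v) f ` Poly_Mapping.keys f)
    = c * Max (lowest_weight s v f ` Poly_Mapping.keys f)" if "Poly_Mapping.keys f \<noteq> {}"
  proof -
    have "lowest_weight (c * s) (c *\<^sub>R v) f ` Poly_Mapping.keys f
      = (*) c ` lowest_weight s v f ` Poly_Mapping.keys f"
      by (simp add: scale image_image)
    then show ?thesis
      using mono_Max_commute[of "(*) c" "lowest_weight s v f ` Poly_Mapping.keys f"] that assms(2)
      by (simp add: monoI)
  qed
  have "lowest_weight (c * s) (c *\<^sub>R v) f \<alpha> = Max (lowest_weight (c * s) (c *\<^sub>R v) f ` Poly_Mapping.keys f)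
    \<longleftrightarrow> lowest_weight s v f \<alpha> = Max (lowest_weight s v f ` Poly_Mapping.keys f)"
    if "\<alpha> \<in> Poly_Mapping.keys f" for \<alpha>
  proof -
    have ne: "Poly_Mapping.keys f \<noteq> {}" using that by auto
    show ?thesis
      by (simp only: scale max[OF ne]) (use assms(2) in simp)
  qed
  then show ?thesis
    unfolding in_u_eq_lowest_terms[OF assms(1)] in_u_eq_lowest_terms[OF cs]
    by (intro sum.cong) auto
qed

lemma in_u_ideal_rescale:
  fixes J :: "(('n::finite \<Rightarrow>\<^sub>0 nat) \<Rightarrow>\<^sub>0 'k::field fps) set"
  assumes "s < 0"
  shows "in_u_ideal R (s, v) J = in_u_ideal R (-1, (1 / - s) *\<^sub>R v) J"
proof -
  have "in_u (s, v) f = in_u (-1, (1 / - s) *\<^sub>R v) f" for f :: "('n \<Rightarrow>\<^sub>0 nat) \<Rightarrow>\<^sub>0 'k fps"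
    using in_u_scale[of "-1" "- s" "(1 / - s) *\<^sub>R v" f] assms by simp
  then show ?thesis unfolding in_u_ideal_def by simp
qed

definition nu_weight :: "('k::zero \<Rightarrow> int) \<Rightarrow> real^'n::finite \<Rightarrow> (('n \<Rightarrow>\<^sub>0 nat) \<Rightarrow>\<^sub>0 'k)
    \<Rightarrow> ('n \<Rightarrow>\<^sub>0 nat) \<Rightarrow> real" where
  "nu_weight \<nu> v g \<alpha> = wdot v \<alpha> - real_of_int (\<nu> (Poly_Mapping.lookup g \<alpha>))"

lemma lookup_in_nu:
  "Poly_Mapping.lookup (in_nu \<nu> res p v g) \<gamma> =
    (if \<gamma> \<in> Poly_Mapping.keys g \<and> nu_weight \<nu> v g \<gamma> = Max (nu_weight \<nu> v g ` Poly_Mapping.keys g)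
     then res (Poly_Mapping.lookup g \<gamma> * p powi (- \<nu> (Poly_Mapping.lookup g \<gamma>))) else 0)"
  unfolding in_nu_def Let_def nu_weight_def[symmetric] by (subst lookup_sum_single) auto

lemma lookup_in_nu_top:
  assumes "\<forall>\<alpha>\<in>Poly_Mapping.keys g. nu_weight \<nu> v g \<alpha> \<le> M"
    and "\<alpha>\<^sub>0 \<in> Poly_Mapping.keys g" "nu_weight \<nu> v g \<alpha>\<^sub>0 = M"
  shows "Poly_Mapping.lookup (in_nu \<nu> res p v g) \<gamma> =
    (if \<gamma> \<in> Poly_Mapping.keys g \<and> nu_weight \<nu> v g \<gamma> = M
     then res (Poly_Mapping.lookup g \<gamma> * p powi (- \<nu> (Poly_Mapping.lookup g \<gamma>))) else 0)"
proof -
  have "Max (nu_weight \<nu> v g ` Poly_Mapping.keys g) = M"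
    using assms by (intro Max_eqI) auto
  then show ?thesis by (simp add: lookup_in_nu)
qed

lemma in_nu_eq_shifted_weights:
  assumes keys: "Poly_Mapping.keys q = Poly_Mapping.keys g"
    and weight: "\<And>\<alpha>. \<alpha> \<in> Poly_Mapping.keys g \<Longrightarrow> nu_weight \<nu> v q \<alpha> = nu_weight \<nu> v g \<alpha> - c"
    and normalized: "\<And>\<alpha>. \<alpha> \<in> Poly_Mapping.keys g \<Longrightarrow>
      Poly_Mapping.lookup q \<alpha> * p powi (- \<nu> (Poly_Mapping.lookup q \<alpha>))
      = Poly_Mapping.lookup g \<alpha> * p powi (- \<nu> (Poly_Mapping.lookup g \<alpha>))"
  shows "in_nu \<nu> res p v q = in_nu \<nu> res p v g"
proof -
  have max: "Max (nu_weight \<nu> v q ` Poly_Mapping.keys g) = Max (nu_weight \<nu> v g ` Poly_Mapping.keys g) - c"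
    if "Poly_Mapping.keys g \<noteq> {}"
  proof -
    have "nu_weight \<nu> v q ` Poly_Mapping.keys g = (\<lambda>x. x - c) ` nu_weight \<nu> v g ` Poly_Mapping.keys g"
      unfolding image_image using weight by (intro image_cong) auto
    then show ?thesis
      using mono_Max_commute[of "\<lambda>x. x - c"] that by (simp add: monoI)
  qed
  have top: "nu_weight \<nu> v q \<alpha> = Max (nu_weight \<nu> v q ` Poly_Mapping.keys g)
    \<longleftrightarrow> nu_weight \<nu> v g \<alpha> = Max (nu_weight \<nu> v g ` Poly_Mapping.keys g)"
    if "\<alpha> \<in> Poly_Mapping.keys g" for \<alpha>
  proof -
    have ne: "Poly_Mapping.keys g \<noteq> {}" using that by auto
    show ?thesis by (simp only: weight[OF that] max[OF ne]) simp
  qed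
  show ?thesis
    by (intro poly_mapping_eqI) (auto simp: lookup_in_nu keys top normalized)
qed

subsection \<open>The complete discretely valued field\<close>

locale complete_dvf =
  fixes \<nu> :: "'k::field \<Rightarrow> int" and p :: 'k and res :: "'k \<Rightarrow> 'f::field" and R :: "'k set"
  assumes discrete_valuation: "discrete_valuation \<nu> p"
    and complete: "val_complete \<nu>"
    and residue_map: "residue_map \<nu> res"
    and subring: "is_subring R"
    and R_subset: "R \<subseteq> val_ring \<nu>"
    and dense: "dense_in_val_ring \<nu> R"
    and p_in_R: "p \<in> R"
begin

text \<open>\<open>val_ideal k\<close> is \<open>p\<^sup>k \<O>\<^sub>K\<close>; reasoning by membership avoids case distinctions on the
  junk value \<open>\<nu> 0\<close>.\<close>

definition val_ideal :: "int \<Rightarrow> 'k set" where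
  "val_ideal k = {a. a = 0 \<or> \<nu> a \<ge> k}"

lemma p_nonzero: "p \<noteq> 0" and val_p: "\<nu> p = 1"
  and val_mult: "a \<noteq> 0 \<Longrightarrow> b \<noteq> 0 \<Longrightarrow> \<nu> (a * b) = \<nu> a + \<nu> b"
  and val_add: "a \<noteq> 0 \<Longrightarrow> b \<noteq> 0 \<Longrightarrow> a + b \<noteq> 0 \<Longrightarrow> \<nu> (a + b) \<ge> min (\<nu> a) (\<nu> b)"
  using discrete_valuation unfolding discrete_valuation_def by auto

lemma val_one: "\<nu> 1 = 0"
  using val_mult[of 1 1] by simp

lemma val_uminus: "\<nu> (- a) = \<nu> a"
proof (cases "a = 0")
  case False
  have "\<nu> (-1) = 0" using val_mult[of "-1" "-1"] val_one by simp
  with False show ?thesis using val_mult[of "-1" a] by simp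
qed simp

lemma val_inverse: "a \<noteq> 0 \<Longrightarrow> \<nu> (inverse a) = - \<nu> a"
  using val_mult[of a "inverse a"] val_one by simp

lemma val_p_power: "\<nu> (p ^ n) = int n"
  by (induction n) (simp_all add: val_one val_mult p_nonzero val_p)

lemma val_p_power_int: "\<nu> (p powi k) = k"
proof (cases "k \<ge> 0")
  case False
  then have "p powi k = inverse (p ^ nat (- k))" by (simp add: power_int_def power_inverse)
  then show ?thesis using False by (simp add: val_inverse p_nonzero val_p_power)
qed (simp add: power_int_def val_p_power)

lemma zero_in_val_ideal [simp]: "0 \<in> val_ideal k"
  unfolding val_ideal_def by simp

lemma in_val_ideal_val: "a \<noteq> 0 \<Longrightarrow> a \<in> val_ideal (\<nu> a)"
  unfolding val_ideal_def by simp

lemma val_ideal_antimono: "a \<in> val_ideal k \<Longrightarrow> j \<le> k \<Longrightarrow> a \<in> val_ideal j"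
  unfolding val_ideal_def by auto

lemma val_ideal_add: "a \<in> val_ideal k \<Longrightarrow> b \<in> val_ideal k \<Longrightarrow> a + b \<in> val_ideal k"
  unfolding val_ideal_def using val_add[of a b] by fastforce

lemma val_ideal_uminus: "a \<in> val_ideal k \<Longrightarrow> - a \<in> val_ideal k"
  unfolding val_ideal_def by (auto simp: val_uminus)

lemma val_ideal_diff: "a \<in> val_ideal k \<Longrightarrow> b \<in> val_ideal k \<Longrightarrow> a - b \<in> val_ideal k"
  using val_ideal_add[OF _ val_ideal_uminus] by (metis diff_conv_add_uminus)

lemma val_ideal_mult: "a \<in> val_ideal k \<Longrightarrow> b \<in> val_ideal j \<Longrightarrow> a * b \<in> val_ideal (k + j)"
  unfolding val_ideal_def by (cases "a = 0"; cases "b = 0") (auto simp: val_mult)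

lemma val_ideal_sum: "(\<And>i. i \<in> F \<Longrightarrow> f i \<in> val_ideal k) \<Longrightarrow> sum f F \<in> val_ideal k"
  by (induction F rule: infinite_finite_induct) (auto intro: val_ideal_add)

lemma p_power_in_val_ideal: "p ^ n \<in> val_ideal (int n)"
  unfolding val_ideal_def by (simp add: val_p_power)

lemma p_power_int_in_val_ideal: "p powi k \<in> val_ideal k"
  unfolding val_ideal_def by (simp add: val_p_power_int)

lemma val_ring_eq_val_ideal: "val_ring \<nu> = val_ideal 0"
  unfolding val_ring_def val_ideal_def by auto

lemma R_in_val_ideal: "r \<in> R \<Longrightarrow> r \<in> val_ideal 0"
  using R_subset val_ring_eq_val_ideal by auto

lemma R_add: "a \<in> R \<Longrightarrow> b \<in> R \<Longrightarrow> a + b \<in> R"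
  and R_mult: "a \<in> R \<Longrightarrow> b \<in> R \<Longrightarrow> a * b \<in> R"
  and R_0: "0 \<in> R" and R_1: "1 \<in> R"
  using subring unfolding is_subring_def by auto

lemma R_sum: "(\<And>i. i \<in> F \<Longrightarrow> f i \<in> R) \<Longrightarrow> sum f F \<in> R"
  by (induction F rule: infinite_finite_induct) (auto intro: R_add R_0)

lemma res_add: "a \<in> val_ideal 0 \<Longrightarrow> b \<in> val_ideal 0 \<Longrightarrow> res (a + b) = res a + res b"
  and res_mult: "a \<in> val_ideal 0 \<Longrightarrow> b \<in> val_ideal 0 \<Longrightarrow> res (a * b) = res a * res b"
  and res_eq_0_iff: "a \<in> val_ideal 0 \<Longrightarrow> res a = 0 \<longleftrightarrow> a \<in> val_ideal 1"
  using residue_map unfolding residue_map_def val_ring_eq_val_ideal[symmetric]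
  by (auto simp: val_ideal_def val_ring_def)

lemma res_0 [simp]: "res 0 = 0"
  using res_eq_0_iff[of 0] by simp

lemma res_eqI:
  assumes a: "a \<in> val_ideal 0" and d: "a - b \<in> val_ideal 1"
  shows "res a = res b"
proof -
  have d0: "a - b \<in> val_ideal 0" using d val_ideal_antimono by auto
  have b: "b \<in> val_ideal 0" using val_ideal_diff[OF a d0] by simp
  have "res a = res (b + (a - b))" by simp
  also have "\<dots> = res b + res (a - b)" using res_add[OF b d0] .
  finally show ?thesis using res_eq_0_iff[OF d0] d by simp
qed

lemma val_add_higher:
  assumes a: "a \<noteq> 0" and e: "e \<in> val_ideal (\<nu> a + 1)"
  shows "a + e \<noteq> 0" "\<nu> (a + e) = \<nu> a"
proof -
  show ne: "a + e \<noteq> 0"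
  proof
    assume "a + e = 0"
    then have "e = - a" by (metis minus_unique)
    with e a show False by (auto simp: val_ideal_def val_uminus)
  qed
  have "a + e \<in> val_ideal (\<nu> a)"
    using val_ideal_add[OF in_val_ideal_val[OF a] val_ideal_antimono[OF e]] by simp
  then have ge: "\<nu> (a + e) \<ge> \<nu> a" using ne by (simp add: val_ideal_def)
  have "(a + e) + - e \<in> val_ideal (min (\<nu> (a + e)) (\<nu> a + 1))"
    by (intro val_ideal_add val_ideal_antimono[OF in_val_ideal_val[OF ne]]
        val_ideal_antimono[OF val_ideal_uminus[OF e]]) simp_all
  then have "\<nu> a \<ge> min (\<nu> (a + e)) (\<nu> a + 1)" using a by (simp add: val_ideal_def)
  with ge show "\<nu> (a + e) = \<nu> a" by linarith
qed

lemma val_lim_iff: "val_lim \<nu> s L \<longleftrightarrow> (\<forall>M. \<exists>N. \<forall>m\<ge>N. s m - L \<in> val_ideal M)"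
  unfolding val_lim_def val_ideal_def by auto

lemma val_lim_in_val_ideal:
  assumes "val_lim \<nu> s L" and "\<forall>m\<ge>N0. s m - x \<in> val_ideal k"
  shows "L - x \<in> val_ideal k"
proof -
  obtain N where N: "\<forall>m\<ge>N. s m - L \<in> val_ideal k"
    using assms(1) unfolding val_lim_iff by blast
  define m where "m = max N N0"
  have "L - x = (s m - x) - (s m - L)" by simp
  also have "\<dots> \<in> val_ideal k"
    by (rule val_ideal_diff) (use N assms(2) in \<open>auto simp: m_def\<close>)
  finally show ?thesis .
qed

lemma val_lim_unique:
  assumes "val_lim \<nu> s L1" "val_lim \<nu> s L2"
  shows "L1 = L2"
proof (rule ccontr)
  assume ne: "L1 \<noteq> L2"
  obtain N where N: "\<forall>m\<ge>N. s m - L2 \<in> val_ideal (\<nu> (L1 - L2) + 1)"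
    using assms(2) unfolding val_lim_iff by blast
  have "L1 - L2 \<in> val_ideal (\<nu> (L1 - L2) + 1)" using val_lim_in_val_ideal[OF assms(1) N] .
  with ne show False by (simp add: val_ideal_def)
qed

lemma subst_p_eqI: "val_lim \<nu> (\<lambda>N. \<Sum>\<beta><N. fps_nth c \<beta> * p ^ \<beta>) L \<Longrightarrow> subst_p \<nu> p c = L"
  unfolding subst_p_def by (rule the_equality) (auto intro: val_lim_unique)

lemma subst_p_0 [simp]: "subst_p \<nu> p 0 = 0"
  by (rule subst_p_eqI) (simp add: val_lim_def)

lemma power_series_tail_in_val_ideal:
  assumes "\<forall>\<beta>. fps_nth c \<beta> \<in> val_ideal 0"
  shows "(\<Sum>\<beta>\<in>{m..<k}. fps_nth c \<beta> * p ^ \<beta>) \<in> val_ideal (int m)"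
proof (rule val_ideal_sum)
  fix \<beta> assume \<beta>: "\<beta> \<in> {m..<k}"
  have "fps_nth c \<beta> * p ^ \<beta> \<in> val_ideal (0 + int \<beta>)"
    using assms val_ideal_mult p_power_in_val_ideal by blast
  then show "fps_nth c \<beta> * p ^ \<beta> \<in> val_ideal (int m)"
    using \<beta> by (auto intro: val_ideal_antimono)
qed

lemma power_series_partial_sums_diff:
  "m \<le> k \<Longrightarrow> (\<Sum>\<beta><k. fps_nth c \<beta> * p ^ \<beta>) - (\<Sum>\<beta><m. fps_nth c \<beta> * p ^ \<beta>)
    = (\<Sum>\<beta>\<in>{m..<k}. fps_nth c \<beta> * p ^ \<beta>)"
  using sum_diff_nat_ivl[of 0 m k] by (simp add: atLeast0LessThan)

lemma power_series_val_lim_exists: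
  assumes "\<forall>\<beta>. fps_nth c \<beta> \<in> val_ideal 0"
  shows "\<exists>L. val_lim \<nu> (\<lambda>N. \<Sum>\<beta><N. fps_nth c \<beta> * p ^ \<beta>) L"
proof -
  let ?s = "\<lambda>N. \<Sum>\<beta><N. fps_nth c \<beta> * p ^ \<beta>"
  have tail: "?s k - ?s m \<in> val_ideal M" if "m \<le> k" "nat M \<le> m" for m k M
    using power_series_tail_in_val_ideal[OF assms, of m k] that
    by (simp add: power_series_partial_sums_diff val_ideal_antimono)
  have "?s m - ?s k \<in> val_ideal M" if "nat M \<le> m" "nat M \<le> k" for m k M
    using tail[of k m M] tail[of m k M] val_ideal_uminus[OF tail[of m k M]] that
    by (cases "m \<le> k") auto
  then have "val_cauchy \<nu> ?s"
    unfolding val_cauchy_def by (auto simp: val_ideal_def)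
  then show ?thesis using complete unfolding val_complete_def by blast
qed

lemma subst_p_minus_lowest_term:
  assumes R: "\<forall>\<beta>. fps_nth c \<beta> \<in> R"
  shows "subst_p \<nu> p c - fps_lowest_coeff c * p ^ subdegree c
    \<in> val_ideal (int (subdegree c) + 1)"
proof -
  let ?b = "subdegree c" and ?x = "fps_lowest_coeff c"
  let ?s = "\<lambda>N. \<Sum>\<beta><N. fps_nth c \<beta> * p ^ \<beta>"
  have c0: "\<forall>\<beta>. fps_nth c \<beta> \<in> val_ideal 0" using R R_in_val_ideal by blast
  obtain L where L: "val_lim \<nu> ?s L" using power_series_val_lim_exists[OF c0] by blast
  have "(\<Sum>\<beta><?b. fps_nth c \<beta> * p ^ \<beta>) = 0"
    by (rule sum.neutral) auto
  then have lowest: "?s (Suc ?b) = ?x * p ^ ?b" by simp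
  have "\<forall>m\<ge>Suc ?b. ?s m - ?x * p ^ ?b \<in> val_ideal (int ?b + 1)"
  proof (intro allI impI)
    fix m assume m: "Suc ?b \<le> m"
    have "?s m - ?x * p ^ ?b = (\<Sum>\<beta>\<in>{Suc ?b..<m}. fps_nth c \<beta> * p ^ \<beta>)"
      using power_series_partial_sums_diff[OF m, of c] unfolding lowest .
    also have "\<dots> \<in> val_ideal (int (Suc ?b))" by (rule power_series_tail_in_val_ideal[OF c0])
    finally show "?s m - ?x * p ^ ?b \<in> val_ideal (int ?b + 1)" by (simp add: add.commute)
  qed
  from val_lim_in_val_ideal[OF L this] show ?thesis unfolding subst_p_eqI[OF L] .
qed

lemma subst_p_in_val_ideal:
  assumes R: "\<forall>\<beta>. fps_nth c \<beta> \<in> R"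
  shows "subst_p \<nu> p c \<in> val_ideal (int (subdegree c))"
    and "res (fps_lowest_coeff c) = 0 \<Longrightarrow> subst_p \<nu> p c \<in> val_ideal (int (subdegree c) + 1)"
proof -
  let ?b = "subdegree c" and ?x = "fps_lowest_coeff c"
  have split: "subst_p \<nu> p c = (subst_p \<nu> p c - ?x * p ^ ?b) + ?x * p ^ ?b" by simp
  have x0: "?x \<in> val_ideal 0" using R R_in_val_ideal by blast
  show "subst_p \<nu> p c \<in> val_ideal (int ?b)"
    using val_ideal_mult[OF x0 p_power_in_val_ideal, of ?b]
      val_ideal_antimono[OF subst_p_minus_lowest_term[OF R]]
    by (subst split, intro val_ideal_add) simp_all
  assume "res ?x = 0"
  then have "?x \<in> val_ideal 1" using res_eq_0_iff[OF x0] by blast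
  then show "subst_p \<nu> p c \<in> val_ideal (int ?b + 1)"
    using val_ideal_mult[OF _ p_power_in_val_ideal, of ?x 1 ?b] subst_p_minus_lowest_term[OF R]
    by (subst split, intro val_ideal_add) (simp_all add: add.commute)
qed

lemma subst_p_unit_lowest_term:
  assumes R: "\<forall>\<beta>. fps_nth c \<beta> \<in> R" and r: "res (fps_lowest_coeff c) \<noteq> 0"
  shows "subst_p \<nu> p c \<noteq> 0" "\<nu> (subst_p \<nu> p c) = int (subdegree c)"
    "res (subst_p \<nu> p c * p powi (- \<nu> (subst_p \<nu> p c))) = res (fps_lowest_coeff c)"
proof -
  let ?b = "subdegree c" and ?x = "fps_lowest_coeff c" and ?a = "subst_p \<nu> p c"
  define e where "e = ?a - ?x * p ^ ?b"
  have x0: "?x \<in> val_ideal 0" using R R_in_val_ideal by blast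
  have x1: "?x \<notin> val_ideal 1" using res_eq_0_iff[OF x0] r by blast
  then have "?x \<noteq> 0" "\<nu> ?x = 0" using x0 by (auto simp: val_ideal_def)
  then have xp: "?x * p ^ ?b \<noteq> 0" "\<nu> (?x * p ^ ?b) = int ?b"
    using p_nonzero by (simp_all add: val_mult val_p_power)
  have e: "e \<in> val_ideal (int ?b + 1)" unfolding e_def by (rule subst_p_minus_lowest_term[OF R])
  have a: "?a = ?x * p ^ ?b + e" unfolding e_def by simp
  show "?a \<noteq> 0" "\<nu> ?a = int ?b"
    using val_add_higher[OF xp(1)] e unfolding a xp(2) by auto
  have "?a * p powi (- int ?b) = ?x + e * p powi (- int ?b)"
    unfolding a by (simp add: algebra_simps power_int_minus p_nonzero)
  moreover have "e * p powi (- int ?b) \<in> val_ideal (int ?b + 1 + - int ?b)"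
    using val_ideal_mult[OF e p_power_int_in_val_ideal] .
  ultimately have "?x - ?a * p powi (- int ?b) \<in> val_ideal 1"
    using val_ideal_uminus by fastforce
  then show "res (?a * p powi (- \<nu> ?a)) = res ?x"
    using res_eqI[OF x0] \<open>\<nu> ?a = int ?b\<close> by simp
qed

subsection \<open>Expansion in digits from \<open>R\<close>\<close>

text \<open>Density of \<open>R\<close> supplies, for each \<open>x \<in> \<O>\<^sub>K\<close>, a representative of \<open>x mod p\<close> in \<open>R\<close>;
  zero is chosen for \<open>x \<in> p\<O>\<^sub>K\<close> so that the digits of \<open>b\<close> below \<open>\<nu> b\<close> vanish.\<close>

definition residue_lift :: "'k \<Rightarrow> 'k" where
  "residue_lift x =
     (if x \<in> val_ideal 1 then 0 else (SOME r. r \<in> R \<and> x - r \<in> val_ideal 1))"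

lemma residue_lift:
  assumes "x \<in> val_ideal 0"
  shows "residue_lift x \<in> R" "x - residue_lift x \<in> val_ideal 1"
proof -
  obtain r where "r \<in> R" "x = r \<or> \<nu> (x - r) \<ge> 1"
    using assms dense unfolding dense_in_val_ring_def val_ring_eq_val_ideal by blast
  then have "\<exists>r. r \<in> R \<and> x - r \<in> val_ideal 1" by (auto simp: val_ideal_def)
  then have "(SOME r. r \<in> R \<and> x - r \<in> val_ideal 1) \<in> R \<and>
      x - (SOME r. r \<in> R \<and> x - r \<in> val_ideal 1) \<in> val_ideal 1"
    by (rule someI_ex)
  then show "residue_lift x \<in> R" "x - residue_lift x \<in> val_ideal 1"
    unfolding residue_lift_def using R_0 by (cases "x \<in> val_ideal 1"; simp)+
qed

definition digit_remainder :: "'k \<Rightarrow> nat \<Rightarrow> 'k" where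
  "digit_remainder b = rec_nat b (\<lambda>n r. r - residue_lift (r * inverse (p ^ n)) * p ^ n)"

definition digit :: "'k \<Rightarrow> nat \<Rightarrow> 'k" where
  "digit b n = residue_lift (digit_remainder b n * inverse (p ^ n))"

definition digit_series :: "'k \<Rightarrow> 'k fps" where
  "digit_series b = Abs_fps (digit b)"

lemma digit_remainder_0: "digit_remainder b 0 = b"
  and digit_remainder_Suc: "digit_remainder b (Suc n) = digit_remainder b n - digit b n * p ^ n"
  unfolding digit_remainder_def digit_def by simp_all

lemma digit_remainder_eq: "digit_remainder b n = b - (\<Sum>\<beta><n. digit b \<beta> * p ^ \<beta>)"
  by (induction n) (simp_all add: digit_remainder_0 digit_remainder_Suc)

lemma inverse_p_power_in_val_ideal: "inverse (p ^ n) \<in> val_ideal (- int n)"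
  unfolding val_ideal_def by (simp add: val_inverse p_nonzero val_p_power)

lemma digit_remainder_in_val_ideal:
  assumes "b \<in> val_ideal 0"
  shows "digit_remainder b n \<in> val_ideal (int n)"
proof (induction n)
  case (Suc n)
  have "digit_remainder b n * inverse (p ^ n) \<in> val_ideal (int n + - int n)"
    by (rule val_ideal_mult[OF Suc inverse_p_power_in_val_ideal])
  then have y: "digit_remainder b n * inverse (p ^ n) \<in> val_ideal 0" by simp
  have "digit_remainder b (Suc n) = (digit_remainder b n * inverse (p ^ n) - digit b n) * p ^ n"
    by (simp add: digit_remainder_Suc algebra_simps p_nonzero digit_def)
  also have "\<dots> \<in> val_ideal (1 + int n)"
    using val_ideal_mult[OF residue_lift(2)[OF y] p_power_in_val_ideal] unfolding digit_def .
  finally show ?case by (simp add: add.commute)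
qed (use assms in \<open>simp add: digit_remainder_0\<close>)

lemma digit_in_R:
  assumes "b \<in> val_ideal 0"
  shows "digit b n \<in> R"
proof -
  have "digit_remainder b n * inverse (p ^ n) \<in> val_ideal (int n + - int n)"
    by (rule val_ideal_mult[OF digit_remainder_in_val_ideal[OF assms] inverse_p_power_in_val_ideal])
  then show ?thesis unfolding digit_def by (intro residue_lift(1)) simp
qed

lemma digit_zero [simp]: "digit 0 n = 0"
proof -
  have "digit_remainder 0 n = 0"
    by (induction n) (simp_all add: digit_remainder_0 digit_remainder_Suc digit_def residue_lift_def)
  then show ?thesis by (simp add: digit_def residue_lift_def)
qed

lemma digit_series_zero [simp]: "digit_series 0 = 0"
  by (rule fps_ext) (simp add: digit_series_def)

lemma subst_p_digit_series:
  assumes "b \<in> val_ideal 0"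
  shows "subst_p \<nu> p (digit_series b) = b"
proof (rule subst_p_eqI)
  have "(\<Sum>\<beta><m. digit b \<beta> * p ^ \<beta>) - b \<in> val_ideal M" if "nat M \<le> m" for m M
    using val_ideal_uminus[OF digit_remainder_in_val_ideal[OF assms, of m]] that
    by (auto simp: digit_remainder_eq intro: val_ideal_antimono)
  then show "val_lim \<nu> (\<lambda>N. \<Sum>\<beta><N. fps_nth (digit_series b) \<beta> * p ^ \<beta>) b"
    unfolding val_lim_iff digit_series_def by auto
qed

lemma digits_below_val:
  assumes "b \<noteq> 0" "b \<in> val_ideal 0" "n \<le> nat (\<nu> b)"
  shows "digit_remainder b n = b" "n < nat (\<nu> b) \<Longrightarrow> digit b n = 0"
proof -
  have "digit b n = 0" if "digit_remainder b n = b" "n < nat (\<nu> b)" for n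
  proof -
    have "\<nu> (b * inverse (p ^ n)) = \<nu> b - int n"
      using assms(1) by (simp add: val_mult val_inverse val_p_power p_nonzero)
    then have "b * inverse (p ^ n) \<in> val_ideal 1"
      using that(2) unfolding val_ideal_def by auto
    then show ?thesis unfolding digit_def residue_lift_def that(1) by simp
  qed
  moreover have "digit_remainder b n = b" if "n \<le> nat (\<nu> b)" for n
    using that by (induction n) (simp_all add: digit_remainder_0 digit_remainder_Suc calculation)
  ultimately show "digit_remainder b n = b" "n < nat (\<nu> b) \<Longrightarrow> digit b n = 0"
    using assms(3) by auto
qed

lemma leading_digit:
  assumes "b \<noteq> 0" "b \<in> val_ideal 0"
  shows "digit b (nat (\<nu> b)) \<noteq> 0" "res (digit b (nat (\<nu> b))) = res (b * p powi (- \<nu> b))"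
proof -
  let ?k = "nat (\<nu> b)" and ?y = "b * inverse (p ^ nat (\<nu> b))"
  have nb: "\<nu> b \<ge> 0" using assms by (simp add: val_ideal_def)
  have "\<nu> ?y = 0" using assms nb by (simp add: val_mult val_inverse val_p_power p_nonzero)
  then have y0: "?y \<in> val_ideal 0" and y1: "?y \<notin> val_ideal 1"
    using assms p_nonzero by (auto simp: val_ideal_def)
  have digit: "digit b ?k = residue_lift ?y"
    unfolding digit_def digits_below_val(1)[OF assms order_refl] ..
  have "res ?y = res (residue_lift ?y)" using res_eqI[OF y0 residue_lift(2)[OF y0]] .
  moreover have "p powi (- \<nu> b) = inverse (p ^ ?k)"
    using nb by (simp add: power_int_def power_inverse)
  ultimately show "res (digit b ?k) = res (b * p powi (- \<nu> b))" using digit by simp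
  show "digit b ?k \<noteq> 0"
    using residue_lift(2)[OF y0] y1 digit by auto
qed

lemma digit_series_in_R: "b \<in> val_ideal 0 \<Longrightarrow> \<forall>\<beta>. fps_nth (digit_series b) \<beta> \<in> R"
  by (simp add: digit_series_def digit_in_R)

lemma digit_series:
  assumes "b \<in> val_ideal 0" "b \<noteq> 0"
  shows "digit_series b \<noteq> 0" "subdegree (digit_series b) = nat (\<nu> b)"
    "res (fps_lowest_coeff (digit_series b)) = res (b * p powi (- \<nu> b))"
proof -
  have lead: "fps_nth (digit_series b) (nat (\<nu> b)) \<noteq> 0"
    using leading_digit(1)[OF assms(2,1)] by (simp add: digit_series_def)
  then show "digit_series b \<noteq> 0" by auto
  show sd: "subdegree (digit_series b) = nat (\<nu> b)"
    using lead digits_below_val(2)[OF assms(2,1)] by (intro subdegreeI) (auto simp: digit_series_def)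
  show "res (fps_lowest_coeff (digit_series b)) = res (b * p powi (- \<nu> b))"
    using leading_digit(2)[OF assms(2,1)] unfolding sd by (simp add: digit_series_def)
qed

subsection \<open>The reduction map\<close>

definition R_poly_fps :: "'k fps set" where
  "R_poly_fps = {c. (\<exists>P. c = fps_of_poly P) \<and> (\<forall>\<beta>. fps_nth c \<beta> \<in> R)}"

definition eval_at_one :: "'k fps \<Rightarrow> 'k" where
  "eval_at_one c = poly (THE P. fps_of_poly P = c) 1"

text \<open>Substitute \<open>t := 1\<close>, then take residues; this carries \<open>in\<^sub>(\<^sub>-\<^sub>1\<^sub>,\<^sub>v\<^sub>) f\<close> to \<open>in\<^sub>\<nu>\<^sub>,\<^sub>v(\<pi> f)\<close>
  or to zero.\<close>

definition reduce_coeff :: "'k fps \<Rightarrow> 'f" where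
  "reduce_coeff c = res (eval_at_one c)"

definition reduce :: "(('n::finite \<Rightarrow>\<^sub>0 nat) \<Rightarrow>\<^sub>0 'k fps) \<Rightarrow> (('n \<Rightarrow>\<^sub>0 nat) \<Rightarrow>\<^sub>0 'f)" where
  "reduce q = Poly_Mapping.map reduce_coeff q"

lemma eval_at_one_fps_of_poly [simp]: "eval_at_one (fps_of_poly P) = poly P 1"
proof -
  have "(THE Q. fps_of_poly Q = fps_of_poly P) = P"
    by (rule the_equality) (auto simp: fps_of_poly_eq_iff)
  then show ?thesis by (simp add: eval_at_one_def)
qed

lemma eval_at_one_in_R:
  assumes "c \<in> R_poly_fps"
  shows "eval_at_one c \<in> val_ideal 0"
proof -
  obtain P where P: "c = fps_of_poly P" "\<forall>\<beta>. fps_nth c \<beta> \<in> R"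
    using assms by (auto simp: R_poly_fps_def)
  have "eval_at_one c = (\<Sum>i\<le>degree P. coeff P i)"
    by (simp add: P(1) poly_altdef)
  also have "\<dots> \<in> R" using P by (intro R_sum) simp
  finally show ?thesis by (rule R_in_val_ideal)
qed

lemma R_poly_fps_0: "0 \<in> R_poly_fps"
  unfolding R_poly_fps_def using R_0 by (auto intro: exI[of _ 0])

lemma R_poly_fps_add:
  assumes "a \<in> R_poly_fps" "b \<in> R_poly_fps"
  shows "a + b \<in> R_poly_fps"
proof -
  obtain P Q where "a = fps_of_poly P" "b = fps_of_poly Q"
    using assms by (auto simp: R_poly_fps_def)
  then have "a + b = fps_of_poly (P + Q)" by (simp add: fps_of_poly_add)
  moreover have "fps_nth (a + b) n \<in> R" for n
    using assms by (auto simp: R_poly_fps_def intro: R_add)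
  ultimately show ?thesis unfolding R_poly_fps_def by blast
qed

lemma R_poly_fps_mult:
  assumes "a \<in> R_poly_fps" "b \<in> R_poly_fps"
  shows "a * b \<in> R_poly_fps"
proof -
  obtain P Q where "a = fps_of_poly P" "b = fps_of_poly Q"
    using assms by (auto simp: R_poly_fps_def)
  then have "a * b = fps_of_poly (P * Q)" by (simp add: fps_of_poly_mult)
  moreover have "fps_nth (a * b) n \<in> R" for n
    unfolding fps_mult_nth using assms by (intro R_sum R_mult) (auto simp: R_poly_fps_def)
  ultimately show ?thesis unfolding R_poly_fps_def by blast
qed

lemma fps_lowest_term_in_R_poly_fps:
  "\<forall>\<beta>. fps_nth c \<beta> \<in> R \<Longrightarrow> fps_lowest_term c \<in> R_poly_fps"
  unfolding R_poly_fps_def using R_0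
  by (intro CollectI conjI exI[of _ "monom (fps_lowest_coeff c) (subdegree c)"])
    (simp_all add: fps_nth_lowest_term fps_lowest_term_def)

lemma reduce_coeff_0 [simp]: "reduce_coeff 0 = 0"
  using eval_at_one_fps_of_poly[of 0] by (simp add: reduce_coeff_def del: eval_at_one_fps_of_poly)

lemma reduce_coeff_add:
  assumes "a \<in> R_poly_fps" "b \<in> R_poly_fps"
  shows "reduce_coeff (a + b) = reduce_coeff a + reduce_coeff b"
proof -
  obtain P Q where "a = fps_of_poly P" "b = fps_of_poly Q"
    using assms by (auto simp: R_poly_fps_def)
  then have "eval_at_one (a + b) = eval_at_one a + eval_at_one b"
    by (simp add: fps_of_poly_add[symmetric])
  then show ?thesis
    unfolding reduce_coeff_def using res_add[OF eval_at_one_in_R eval_at_one_in_R] assms by simp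
qed

lemma reduce_coeff_mult:
  assumes "a \<in> R_poly_fps" "b \<in> R_poly_fps"
  shows "reduce_coeff (a * b) = reduce_coeff a * reduce_coeff b"
proof -
  obtain P Q where "a = fps_of_poly P" "b = fps_of_poly Q"
    using assms by (auto simp: R_poly_fps_def)
  then have "eval_at_one (a * b) = eval_at_one a * eval_at_one b"
    by (simp add: fps_of_poly_mult[symmetric])
  then show ?thesis
    unfolding reduce_coeff_def using res_mult[OF eval_at_one_in_R eval_at_one_in_R] assms by simp
qed

lemma reduce_coeff_lowest_term:
  "\<forall>\<beta>. fps_nth c \<beta> \<in> R \<Longrightarrow> reduce_coeff (fps_lowest_term c) = res (fps_lowest_coeff c)"
  by (simp add: reduce_coeff_def fps_lowest_term_def poly_monom)

lemma RtxPoly_iff: "q \<in> RtxPoly R \<longleftrightarrow> (\<forall>\<alpha>. Poly_Mapping.lookup q \<alpha> \<in> R_poly_fps)"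
proof -
  have "c \<in> R_poly_fps \<longleftrightarrow> (\<forall>\<beta>. fps_nth c \<beta> \<in> R) \<and> finite {\<beta>. fps_nth c \<beta> \<noteq> 0}"
    for c :: "'k fps"
  proof
    assume c: "c \<in> R_poly_fps"
    then obtain P where "c = fps_of_poly P" by (auto simp: R_poly_fps_def)
    then have "{\<beta>. fps_nth c \<beta> \<noteq> 0} \<subseteq> {..degree P}"
      by (auto simp: coeff_eq_0 intro: ccontr)
    then show "(\<forall>\<beta>. fps_nth c \<beta> \<in> R) \<and> finite {\<beta>. fps_nth c \<beta> \<noteq> 0}"
      using c finite_subset by (auto simp: R_poly_fps_def)
  next
    assume c: "(\<forall>\<beta>. fps_nth c \<beta> \<in> R) \<and> finite {\<beta>. fps_nth c \<beta> \<noteq> 0}"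
    then obtain N where "\<forall>\<beta>\<in>{\<beta>. fps_nth c \<beta> \<noteq> 0}. \<beta> < N"
      using finite_nat_bounded[of "{\<beta>. fps_nth c \<beta> \<noteq> 0}"] by auto
    then have "c = fps_of_poly (truncate_fps N c)"
      by (intro fps_ext) auto
    then show "c \<in> R_poly_fps" using c unfolding R_poly_fps_def by blast
  qed
  then show ?thesis by (auto simp: RtxPoly_def RtX_def)
qed

lemma RtxPoly_0: "0 \<in> RtxPoly R"
  by (simp add: RtxPoly_iff R_poly_fps_0)

lemma RtxPoly_add: "a \<in> RtxPoly R \<Longrightarrow> b \<in> RtxPoly R \<Longrightarrow> a + b \<in> RtxPoly R"
  by (simp add: RtxPoly_iff lookup_add R_poly_fps_add)

lemma RtxPoly_sum: "(\<And>i. i \<in> F \<Longrightarrow> x i \<in> RtxPoly R) \<Longrightarrow> sum x F \<in> RtxPoly R"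
  by (induction F rule: infinite_finite_induct) (auto intro: RtxPoly_add RtxPoly_0)

lemma RtxPoly_single: "c \<in> R_poly_fps \<Longrightarrow> Poly_Mapping.single \<gamma> c \<in> RtxPoly R"
  by (simp add: RtxPoly_iff lookup_single when_def R_poly_fps_0)

lemma RtxPoly_mult: "a \<in> RtxPoly R \<Longrightarrow> b \<in> RtxPoly R \<Longrightarrow> a * b \<in> RtxPoly R"
  unfolding times_poly_mapping_expand[of a b]
  by (intro RtxPoly_sum RtxPoly_single R_poly_fps_mult) (auto simp: RtxPoly_iff)

lemma RtxPoly_1: "1 \<in> RtxPoly R"
proof -
  have "(1 :: 'k fps) \<in> R_poly_fps"
    unfolding R_poly_fps_def using R_0 R_1 by (auto intro: exI[of _ 1])
  then show ?thesis
    using RtxPoly_single[of 1 0] by (simp add: one_poly_mapping_def)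
qed

lemma reduce_0: "reduce 0 = 0"
  by (rule poly_mapping_eqI) (simp add: reduce_def lookup_map_zero)

lemma reduce_add:
  "a \<in> RtxPoly R \<Longrightarrow> b \<in> RtxPoly R \<Longrightarrow> reduce (a + b) = reduce a + reduce b"
  by (rule poly_mapping_eqI) (simp add: reduce_def lookup_map_zero lookup_add reduce_coeff_add RtxPoly_iff)

lemma reduce_sum:
  "(\<And>i. i \<in> F \<Longrightarrow> x i \<in> RtxPoly R) \<Longrightarrow> reduce (sum x F) = (\<Sum>i\<in>F. reduce (x i))"
proof (induction F rule: infinite_finite_induct)
  case (insert i F)
  then show ?case by (simp add: reduce_add RtxPoly_sum)
qed (simp_all add: reduce_0)

lemma reduce_single: "reduce (Poly_Mapping.single \<gamma> c) = Poly_Mapping.single \<gamma> (reduce_coeff c)"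
  unfolding reduce_def by (rule map_single) simp

lemma reduce_eq_sum_single:
  "reduce a = (\<Sum>\<alpha>\<in>Poly_Mapping.keys a. Poly_Mapping.single \<alpha> (reduce_coeff (Poly_Mapping.lookup a \<alpha>)))"
  by (rule poly_mapping_eqI) (auto simp: reduce_def lookup_map_zero lookup_sum_single in_keys_iff)

lemma reduce_mult:
  assumes "a \<in> RtxPoly R" "b \<in> RtxPoly R"
  shows "reduce (a * b) = reduce a * reduce b"
proof -
  have ab: "Poly_Mapping.lookup a \<alpha> \<in> R_poly_fps" "Poly_Mapping.lookup b \<alpha> \<in> R_poly_fps" for \<alpha>
    using assms by (auto simp: RtxPoly_iff)
  have "reduce (a * b) = (\<Sum>\<alpha>\<in>Poly_Mapping.keys a. \<Sum>\<beta>\<in>Poly_Mapping.keys b.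
      reduce (Poly_Mapping.single (\<alpha> + \<beta>) (Poly_Mapping.lookup a \<alpha> * Poly_Mapping.lookup b \<beta>)))"
    unfolding times_poly_mapping_expand[of a b] using ab
    by (subst reduce_sum, (intro RtxPoly_sum RtxPoly_single R_poly_fps_mult; simp))+ (rule refl)
  also have "\<dots> = reduce a * reduce b"
    unfolding reduce_eq_sum_single[of a] reduce_eq_sum_single[of b] sum_product using ab
    by (simp add: reduce_single reduce_coeff_mult mult_single)
  finally show ?thesis .
qed

subsection \<open>Initial forms of \<open>f\<close> and of \<open>\<pi> f\<close>\<close>

lemma RtX_coeff_in_R: "f \<in> RtX R \<Longrightarrow> \<forall>\<beta>. fps_nth (Poly_Mapping.lookup f \<alpha>) \<beta> \<in> R"
  unfolding RtX_def by auto

lemma lookup_pi_map: "Poly_Mapping.lookup (pi_map \<nu> p f) \<alpha> = subst_p \<nu> p (Poly_Mapping.lookup f \<alpha>)"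
  unfolding pi_map_def by (rule lookup_map_zero) simp

lemma in_u_in_RtxPoly: "f \<in> RtX R \<Longrightarrow> in_u (-1, v) f \<in> RtxPoly R"
  unfolding in_u_eq_lowest_terms[of "-1", simplified]
  by (intro RtxPoly_sum RtxPoly_single)
    (simp add: fps_lowest_term_in_R_poly_fps RtX_coeff_in_R R_poly_fps_0)

lemma lookup_reduce_in_u:
  assumes "f \<in> RtX R"
  shows "Poly_Mapping.lookup (reduce (in_u (-1, v) f)) \<gamma> =
    (if \<gamma> \<in> Poly_Mapping.keys f \<and>
        lowest_weight (-1) v f \<gamma> = Max (lowest_weight (-1) v f ` Poly_Mapping.keys f)
     then res (fps_lowest_coeff (Poly_Mapping.lookup f \<gamma>)) else 0)"
  unfolding in_u_eq_lowest_terms[of "-1", simplified] reduce_def lookup_map_zero[where g = reduce_coeff, OF reduce_coeff_0]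
  by (simp add: lookup_sum_single reduce_coeff_lowest_term[OF RtX_coeff_in_R[OF assms]])

lemma nu_weight_pi_map_le:
  assumes f: "f \<in> RtX R" and \<alpha>: "\<alpha> \<in> Poly_Mapping.keys (pi_map \<nu> p f)"
  shows "\<alpha> \<in> Poly_Mapping.keys f"
    and "nu_weight \<nu> v (pi_map \<nu> p f) \<alpha> \<le> lowest_weight (-1) v f \<alpha>"
    and "res (fps_lowest_coeff (Poly_Mapping.lookup f \<alpha>)) = 0 \<Longrightarrow>
      nu_weight \<nu> v (pi_map \<nu> p f) \<alpha> \<le> lowest_weight (-1) v f \<alpha> - 1"
proof -
  let ?c = "Poly_Mapping.lookup f \<alpha>"
  have a: "subst_p \<nu> p ?c \<noteq> 0" using \<alpha> by (simp add: in_keys_iff lookup_pi_map)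
  then show "\<alpha> \<in> Poly_Mapping.keys f" by (auto simp: in_keys_iff)
  have weight: "nu_weight \<nu> v (pi_map \<nu> p f) \<alpha> = lowest_weight (-1) v f \<alpha> + (subdegree ?c - \<nu> (subst_p \<nu> p ?c))"
    by (simp add: nu_weight_def lowest_weight_def lookup_pi_map)
  have "int (subdegree ?c) \<le> \<nu> (subst_p \<nu> p ?c)"
    using subst_p_in_val_ideal(1)[OF RtX_coeff_in_R[OF f, of \<alpha>]] a by (simp add: val_ideal_def)
  then show "nu_weight \<nu> v (pi_map \<nu> p f) \<alpha> \<le> lowest_weight (-1) v f \<alpha>"
    unfolding weight by simp
  show "nu_weight \<nu> v (pi_map \<nu> p f) \<alpha> \<le> lowest_weight (-1) v f \<alpha> - 1"
    if "res (fps_lowest_coeff ?c) = 0"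
  proof -
    have "int (subdegree ?c) + 1 \<le> \<nu> (subst_p \<nu> p ?c)"
      using subst_p_in_val_ideal(2)[OF RtX_coeff_in_R[OF f] that] a by (simp add: val_ideal_def)
    then show ?thesis unfolding weight by simp
  qed
qed

lemma nu_weight_pi_map_unit:
  assumes f: "f \<in> RtX R" and r: "res (fps_lowest_coeff (Poly_Mapping.lookup f \<alpha>)) \<noteq> 0"
  shows "\<alpha> \<in> Poly_Mapping.keys (pi_map \<nu> p f)"
    and "nu_weight \<nu> v (pi_map \<nu> p f) \<alpha> = lowest_weight (-1) v f \<alpha>"
    and "res (Poly_Mapping.lookup (pi_map \<nu> p f) \<alpha> * p powi (- \<nu> (Poly_Mapping.lookup (pi_map \<nu> p f) \<alpha>)))
      = res (fps_lowest_coeff (Poly_Mapping.lookup f \<alpha>))"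
  using subst_p_unit_lowest_term[OF RtX_coeff_in_R[OF f] r]
  by (simp_all add: in_keys_iff lookup_pi_map nu_weight_def lowest_weight_def)

text \<open>Monomials whose lowest coefficient lies in \<open>p \<O>\<^sub>K\<close> drop out on both sides; the remaining
  ones keep their weight, so the two maxima agree as soon as one such monomial is extremal.\<close>

lemma reduce_in_u_eq_in_nu_or_zero:
  assumes f: "f \<in> RtX R"
  shows "reduce (in_u (-1, v) f) = 0 \<or> reduce (in_u (-1, v) f) = in_nu \<nu> res p v (pi_map \<nu> p f)"
proof -
  let ?a = "pi_map \<nu> p f" and ?L = "lowest_weight (-1) v f"
  let ?x = "\<lambda>\<alpha>. fps_lowest_coeff (Poly_Mapping.lookup f \<alpha>)"
  define M where "M = Max (?L ` Poly_Mapping.keys f)"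
  define U where "U = {\<alpha> \<in> Poly_Mapping.keys f. ?L \<alpha> = M \<and> res (?x \<alpha>) \<noteq> 0}"
  have reduce: "Poly_Mapping.lookup (reduce (in_u (-1, v) f)) \<gamma> = (if \<gamma> \<in> U then res (?x \<gamma>) else 0)" for \<gamma>
    unfolding lookup_reduce_in_u[OF f] M_def U_def by auto
  have LM: "?L \<alpha> \<le> M" if "\<alpha> \<in> Poly_Mapping.keys f" for \<alpha>
    using that by (simp add: M_def)
  show ?thesis
  proof (cases "U = {}")
    case True
    then show ?thesis using reduce by (auto intro: poly_mapping_eqI)
  next
    case False
    then obtain \<alpha>\<^sub>0 where \<alpha>\<^sub>0: "\<alpha>\<^sub>0 \<in> U" by blast
    have le: "\<forall>\<alpha>\<in>Poly_Mapping.keys ?a. nu_weight \<nu> v ?a \<alpha> \<le> M"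
      using nu_weight_pi_map_le(1)[OF f] nu_weight_pi_map_le(2)[OF f, where v = v] LM by fastforce
    have top: "\<alpha> \<in> Poly_Mapping.keys ?a \<and> nu_weight \<nu> v ?a \<alpha> = M \<longleftrightarrow> \<alpha> \<in> U" for \<alpha>
    proof
      assume \<alpha>: "\<alpha> \<in> Poly_Mapping.keys ?a \<and> nu_weight \<nu> v ?a \<alpha> = M"
      then have "\<alpha> \<in> Poly_Mapping.keys f" by (auto intro: nu_weight_pi_map_le(1)[OF f])
      with \<alpha> LM nu_weight_pi_map_le(2,3)[OF f, of \<alpha> v] show "\<alpha> \<in> U"
        unfolding U_def by force
    qed (use nu_weight_pi_map_unit(1,2)[OF f] in \<open>auto simp: U_def\<close>)
    have "Poly_Mapping.lookup (in_nu \<nu> res p v ?a) \<gamma> = Poly_Mapping.lookup (reduce (in_u (-1, v) f)) \<gamma>" for \<gamma>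
      unfolding lookup_in_nu_top[OF le conjunct1[OF top[THEN iffD2, OF \<alpha>\<^sub>0]] conjunct2[OF top[THEN iffD2, OF \<alpha>\<^sub>0]]]
        reduce top
      using nu_weight_pi_map_unit(3)[OF f] by (auto simp: U_def)
    then show ?thesis by (auto intro: poly_mapping_eqI)
  qed
qed

lemma digit_lift:
  assumes g: "\<forall>\<alpha>. Poly_Mapping.lookup g \<alpha> \<in> val_ideal 0"
  defines "f \<equiv> Poly_Mapping.map digit_series g"
  shows "f \<in> RtX R" "pi_map \<nu> p f = g" "reduce (in_u (-1, v) f) = in_nu \<nu> res p v g"
proof -
  have lookup_f: "Poly_Mapping.lookup f \<alpha> = digit_series (Poly_Mapping.lookup g \<alpha>)" for \<alpha>
    unfolding f_def by (rule lookup_map_zero) simp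
  show f: "f \<in> RtX R"
    using digit_series_in_R g by (simp add: RtX_def lookup_f)
  show "pi_map \<nu> p f = g"
    by (rule poly_mapping_eqI) (simp add: lookup_pi_map lookup_f subst_p_digit_series g)
  have keys: "Poly_Mapping.keys f = Poly_Mapping.keys g"
    using digit_series(1) g by (auto simp: in_keys_iff lookup_f)
  have weight: "lowest_weight (-1) v f \<alpha> = nu_weight \<nu> v g \<alpha>"
    and lowest: "res (fps_lowest_coeff (Poly_Mapping.lookup f \<alpha>))
      = res (Poly_Mapping.lookup g \<alpha> * p powi (- \<nu> (Poly_Mapping.lookup g \<alpha>)))"
    if "\<alpha> \<in> Poly_Mapping.keys g" for \<alpha>
  proof -
    have "Poly_Mapping.lookup g \<alpha> \<noteq> 0" using that by (simp add: in_keys_iff)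
    moreover from this have "\<nu> (Poly_Mapping.lookup g \<alpha>) \<ge> 0" using g by (auto simp: val_ideal_def)
    ultimately show "lowest_weight (-1) v f \<alpha> = nu_weight \<nu> v g \<alpha>"
      "res (fps_lowest_coeff (Poly_Mapping.lookup f \<alpha>))
        = res (Poly_Mapping.lookup g \<alpha> * p powi (- \<nu> (Poly_Mapping.lookup g \<alpha>)))"
      using digit_series(2,3)[OF g[rule_format]] by (simp_all add: lowest_weight_def nu_weight_def lookup_f)
  qed
  have "Max (lowest_weight (-1) v f ` Poly_Mapping.keys f) = Max (nu_weight \<nu> v g ` Poly_Mapping.keys g)"
    unfolding keys using weight by (metis (no_types, lifting) image_cong)
  then show "reduce (in_u (-1, v) f) = in_nu \<nu> res p v g"
    by (intro poly_mapping_eqI) (auto simp: lookup_reduce_in_u[OF f] lookup_in_nu keys weight lowest)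
qed

lemma in_nu_p_power_times:
  "in_nu \<nu> res p v (Poly_Mapping.single 0 (p ^ k) * g) = in_nu \<nu> res p v g"
proof (rule in_nu_eq_shifted_weights)
  let ?q = "Poly_Mapping.single 0 (p ^ k) * g"
  have lookup_q: "Poly_Mapping.lookup ?q \<alpha> = p ^ k * Poly_Mapping.lookup g \<alpha>" for \<alpha>
    by (rule lookup_single_zero_times)
  show "Poly_Mapping.keys ?q = Poly_Mapping.keys g"
    by (auto simp: in_keys_iff lookup_q p_nonzero)
  fix \<alpha> assume "\<alpha> \<in> Poly_Mapping.keys g"
  then have val: "\<nu> (Poly_Mapping.lookup ?q \<alpha>) = int k + \<nu> (Poly_Mapping.lookup g \<alpha>)"
    using p_nonzero by (simp add: lookup_q val_mult val_p_power in_keys_iff)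
  then show "nu_weight \<nu> v ?q \<alpha> = nu_weight \<nu> v g \<alpha> - real k"
    by (simp add: nu_weight_def)
  have "p powi (- \<nu> (Poly_Mapping.lookup ?q \<alpha>)) = p powi (- int k) * p powi (- \<nu> (Poly_Mapping.lookup g \<alpha>))"
    using p_nonzero by (simp add: val power_int_add[symmetric])
  moreover have "p ^ k * p powi (- int k) = 1"
    using p_nonzero by (simp add: power_int_minus)
  ultimately show "Poly_Mapping.lookup ?q \<alpha> * p powi (- \<nu> (Poly_Mapping.lookup ?q \<alpha>))
    = Poly_Mapping.lookup g \<alpha> * p powi (- \<nu> (Poly_Mapping.lookup g \<alpha>))"
    unfolding lookup_q by (simp add: algebra_simps)
qed

lemma in_nu_lift_to_preimage:
  assumes I: "I = gen_ideal UNIV G" and g: "g \<in> I"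
  obtains f where "f \<in> pi_preimage \<nu> p R I" "reduce (in_u (-1, v) f) = in_nu \<nu> res p v g"
proof -
  define k where "k = nat (Max (insert 0 ((\<lambda>\<alpha>. - \<nu> (Poly_Mapping.lookup g \<alpha>)) ` Poly_Mapping.keys g)))"
  have k: "int k + \<nu> (Poly_Mapping.lookup g \<alpha>) \<ge> 0" if "\<alpha> \<in> Poly_Mapping.keys g" for \<alpha>
  proof -
    have "- \<nu> (Poly_Mapping.lookup g \<alpha>) \<le> Max (insert 0 ((\<lambda>\<alpha>. - \<nu> (Poly_Mapping.lookup g \<alpha>)) ` Poly_Mapping.keys g))"
      using that by (intro Max_ge) auto
    then show ?thesis unfolding k_def by linarith
  qed
  define g' where "g' = Poly_Mapping.single 0 (p ^ k) * g"
  have "g' \<in> I" unfolding g'_def I by (rule gen_ideal_mult_left) (use g I in simp)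
  have "Poly_Mapping.lookup g' \<alpha> \<in> val_ideal 0" for \<alpha>
  proof (cases "\<alpha> \<in> Poly_Mapping.keys g")
    case True
    then show ?thesis using k[OF True] p_nonzero
      by (simp add: g'_def lookup_single_zero_times in_keys_iff val_ideal_def val_mult val_p_power)
  qed (simp add: g'_def lookup_single_zero_times in_keys_iff)
  then obtain f where "f \<in> RtX R" "pi_map \<nu> p f = g'" "reduce (in_u (-1, v) f) = in_nu \<nu> res p v g'"
    using digit_lift by blast
  moreover have "in_nu \<nu> res p v g' = in_nu \<nu> res p v g"
    unfolding g'_def by (rule in_nu_p_power_times)
  ultimately show ?thesis
    using \<open>g' \<in> I\<close> by (intro that[of f]) (simp_all add: pi_preimage_def)
qed

lemma reduce_in_u_in_in_nu_ideal:
  assumes "f \<in> pi_preimage \<nu> p R I"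
  shows "reduce (in_u (-1, v) f) \<in> in_nu_ideal \<nu> res p v I"
proof -
  have f: "f \<in> RtX R" and "pi_map \<nu> p f \<in> I" using assms by (auto simp: pi_preimage_def)
  then have "in_nu \<nu> res p v (pi_map \<nu> p f) \<in> in_nu_ideal \<nu> res p v I"
    unfolding in_nu_ideal_def by (intro gen_in_gen_ideal) auto
  then show ?thesis
    using reduce_in_u_eq_in_nu_or_zero[OF f, of v] zero_in_gen_ideal
    unfolding in_nu_ideal_def by auto
qed

lemma reduce_in_u_ideal_subset_in_nu_ideal:
  assumes "q \<in> in_u_ideal R (-1, v) (pi_preimage \<nu> p R I)"
  shows "reduce q \<in> in_nu_ideal \<nu> res p v I"
proof -
  obtain m h u where q: "q = (\<Sum>i<(m::nat). h i * u i)"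
    and h: "\<forall>i<m. h i \<in> RtxPoly R" and u: "\<forall>i<m. u i \<in> in_u (-1, v) ` pi_preimage \<nu> p R I"
    using assms unfolding in_u_ideal_def gen_ideal_def by blast
  have u_R: "u i \<in> RtxPoly R" "reduce (u i) \<in> in_nu_ideal \<nu> res p v I" if i: "i < m" for i
  proof -
    obtain f where f: "f \<in> pi_preimage \<nu> p R I" "u i = in_u (-1, v) f"
      using u i by blast
    then show "u i \<in> RtxPoly R" using in_u_in_RtxPoly[of f v] by (simp add: pi_preimage_def)
    show "reduce (u i) \<in> in_nu_ideal \<nu> res p v I"
      using reduce_in_u_in_in_nu_ideal[OF f(1)] f(2) by simp
  qed
  have "reduce q = (\<Sum>i<m. reduce (h i * u i))"
    unfolding q by (rule reduce_sum) (simp add: RtxPoly_mult h u_R)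
  also have "\<dots> = (\<Sum>i<m. reduce (h i) * reduce (u i))"
    by (rule sum.cong[OF refl]) (simp add: reduce_mult h u_R)
  also have "\<dots> \<in> in_nu_ideal \<nu> res p v I"
    using u_R(2) unfolding in_nu_ideal_def by (intro gen_ideal_sum gen_ideal_mult_left) simp
  finally show ?thesis .
qed

lemma in_nu_ideal_eq_reduce_in_u_ideal:
  assumes I: "I = gen_ideal UNIV G"
  shows "in_nu_ideal \<nu> res p v I = gen_ideal UNIV (reduce ` in_u_ideal R (-1, v) (pi_preimage \<nu> p R I))"
    (is "_ = gen_ideal UNIV (reduce ` ?U)")
proof
  show "in_nu_ideal \<nu> res p v I \<subseteq> gen_ideal UNIV (reduce ` ?U)"
    unfolding in_nu_ideal_def
  proof (rule gen_ideal_mono, rule image_subsetI)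
    fix g assume "g \<in> I"
    then obtain f where f: "f \<in> pi_preimage \<nu> p R I" "reduce (in_u (-1, v) f) = in_nu \<nu> res p v g"
      using in_nu_lift_to_preimage[OF I] by blast
    have "in_u (-1, v) f \<in> ?U"
      unfolding in_u_ideal_def by (rule gen_in_gen_ideal[OF RtxPoly_1]) (use f in blast)
    then show "in_nu \<nu> res p v g \<in> reduce ` ?U" using f(2) by force
  qed
  show "gen_ideal UNIV (reduce ` ?U) \<subseteq> in_nu_ideal \<nu> res p v I"
    using reduce_in_u_ideal_subset_in_nu_ideal unfolding in_nu_ideal_def
    by (intro gen_ideal_minimal) auto
qed

end

lemma snd_closure_slice_subset_closure:
  fixes S :: "(real \<times> 'a::real_normed_vector) set"
  assumes "\<And>z. z \<in> S \<Longrightarrow> (1 / - fst z) *\<^sub>R snd z \<in> P"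
  shows "snd ` (closure S \<inter> {z. fst z = -1}) \<subseteq> closure P"
proof
  fix x assume "x \<in> snd ` (closure S \<inter> {z. fst z = -1})"
  then obtain z where z: "z \<in> closure S" "fst z = -1" "x = snd z" by auto
  then obtain \<sigma> where \<sigma>: "\<forall>n. \<sigma> n \<in> S" "\<sigma> \<longlonglongrightarrow> z"
    unfolding closure_sequential by blast
  have "(\<lambda>n. (1 / - fst (\<sigma> n)) *\<^sub>R snd (\<sigma> n)) \<longlonglongrightarrow> (1 / - fst z) *\<^sub>R snd z"
    using z(2) by (intro tendsto_intros \<sigma>(2)) auto
  then show "x \<in> closure P"
    unfolding closure_sequential using z(2,3) \<sigma>(1) assms by force
qed

theorem corollary3p5:
  fixes \<nu> :: "'k::field \<Rightarrow> int" and p :: 'k and res :: "'k \<Rightarrow> 'f::field"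
    and R :: "'k set"
    and I :: "(('n::finite \<Rightarrow>\<^sub>0 nat) \<Rightarrow>\<^sub>0 'k) set" and w :: "real^'n"
  assumes "discrete_valuation \<nu> p"
    and "val_complete \<nu>"
    and "residue_map \<nu> res"
    and "noetherian_subring R"
    and "R \<subseteq> val_ring \<nu>"
    and "dense_in_val_ring \<nu> R"
    and "p \<in> R"
    and "homogeneous_ideal I"
  shows "snd ` (groebner_cone R (-1, w) (pi_preimage \<nu> p R I) \<inter> {v. fst v = -1})
           \<subseteq> groebner_polytope \<nu> res p I w"
proof -
  interpret complete_dvf \<nu> p res R
    using assms by unfold_locales (auto simp: noetherian_subring_def)
  obtain G where I: "I = gen_ideal UNIV G"
    using assms(8) unfolding homogeneous_ideal_def by blast
  let ?J = "pi_preimage \<nu> p R I"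
  have "(1 / - s) *\<^sub>R v \<in> {v. in_nu_ideal \<nu> res p v I = in_nu_ideal \<nu> res p w I}"
    if "s < 0" "in_u_ideal R (s, v) ?J = in_u_ideal R (-1, w) ?J" for s v
    using that in_u_ideal_rescale[OF \<open>s < 0\<close>, of R v ?J]
    by (simp add: in_nu_ideal_eq_reduce_in_u_ideal[OF I])
  then show ?thesis
    unfolding groebner_cone_def groebner_polytope_def
    by (intro snd_closure_slice_subset_closure) auto
qed

end
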